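(* Consider the algorithm SR-DFF run with input $m$ on a stream consistent with a representation $\mathcal{G}$ of size $m$ with at most $k$ exceptions. For any two valid non-corrupted rules $C[x]$ and $C[x']$ that exist at the same time in the rule list $L$, $G(x)\neq G(x')$.
   Context: Setting. $\mathcal{X}$ is a domain, $\mathcal{Y}$ a finite label set, $\Phi$ a set of binary features on $\mathcal{X}$ closed under negation. A representation of size $m$ is a cover $\mathcal{G}=\{G_1,\dots,G_m\}$ of $\mathcal{X}$ by components with labels $\ell(G)$; each $x$ has a fixed component $G(x)\ni x$; $c^*(x)=\ell(G(x))$; for components $G_i,G_j$ with different labels there is $\phi(G_i,G_j)\in\Phi$ true on all of $G_i$ and false on all of $G_j$, with $\phi(G_j,G_i)=\neg\phi(G_i,G_j)$. Protocol: the learner first gets $x_0$ with label $y_0$; then each example $x_t$ arrives, the learner predicts a label with an explanation example previously seen with that label; on a mistake the teacher gives $y_t=c^*(x_t)$ and $\phi(G(x_t),G(\hat x_t))$, $\hat x_t$ the explanation. An exception is an example on which the feedback is inconsistent with the representation/protocol; a stream is consistent with $\mathcal{G}$ with at most $k$ exceptions if at most $k$ examples are exceptions. Non-exception examples are called valid. SR-DFF (input $m$): receives $(x_0,y_0)$; maintains a list $L$ of rules, each indexed by a representative example $x$, with a conjunction $C[x]$ of features and a label $\texttt{label}[x]$. On $x_t$: if some $C[\hat x]\in L$ is satisfied by $x_t$, predict $\texttt{label}[\hat x]$ with explanation $\hat x$; if incorrect, receive $y_t,\phi$, set $C[\hat x]:=C[\hat x]\wedge\neg\phi$, and delete the rule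 if $C[\hat x]$ has at least $m$ features. Otherwise predict $y_0$ with explanation $x_0$; if incorrect, receive $y_t,\phi$ and add a new rule with empty conjunction $C[x_t]$ and $\texttt{label}[x_t]=y_t$. A rule $C[x]$ is valid if $x$ is a valid example. A rule is corrupted if at least one of the features in its conjunction was added during a refinement step triggered by an example $x_t$ that was an exception. *)

theory Defs
  imports Main
begin

type_synonym 'x feat = "'x \<Rightarrow> bool"

(* A rule of SR-DFF: (creation time s of its representative example x_s,
   (conjunction, label)).  The conjunction is a list of entries (u, f):
   feature f was added during the refinement step triggered by example x_u. *)
type_synonym ('x,'y) rule = "nat \<times> ((nat \<times> 'x feat) list \<times> 'y)"

(* Representation of size m: components G 0 .. G (m-1), labels ell i,
   fixed component index gi x of each x, separating features sep i j. *)
definition representation ::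
  "'x feat set \<Rightarrow> nat \<Rightarrow> (nat \<Rightarrow> 'x set) \<Rightarrow> (nat \<Rightarrow> 'y) \<Rightarrow> ('x \<Rightarrow> nat)
   \<Rightarrow> (nat \<Rightarrow> nat \<Rightarrow> 'x feat) \<Rightarrow> bool" where
  "representation Phi m G ell gi sep \<longleftrightarrow>
     (\<forall>f\<in>Phi. (\<lambda>z. \<not> f z) \<in> Phi) \<and>
     (\<Union>i<m. G i) = UNIV \<and>
     (\<forall>x. gi x < m \<and> x \<in> G (gi x)) \<and>
     (\<forall>i<m. \<forall>j<m. ell i \<noteq> ell j \<longrightarrow>
        sep i j \<in> Phi \<and> (\<forall>z\<in>G i. sep i j z) \<and> (\<forall>z\<in>G j. \<not> sep i j z) \<and>
        sep j i = (\<lambda>z. \<not> sep i j z))"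

definition sat :: "'x \<Rightarrow> (nat \<times> 'x feat) list \<Rightarrow> bool" where
  "sat x C \<longleftrightarrow> (\<forall>(u,f)\<in>set C. f x)"

(* predicted label when the explanation is x_e (e = 0: default x_0 with label y_0) *)
definition pred :: "'y \<Rightarrow> ('x,'y) rule list \<Rightarrow> nat \<Rightarrow> 'y" where
  "pred y0 L e = (if e = 0 then y0 else snd (the (map_of L e)))"

(* One step of SR-DFF (input m) on example xs t with teacher label ys t and
   teacher feature phis t (used only on a mistake); e is the time index of the
   explanation example x_e chosen by the learner; L is the current rule list,
   L' the rule list afterwards. *)
definition sr_step ::
  "nat \<Rightarrow> (nat \<Rightarrow> 'x) \<Rightarrow> (nat \<Rightarrow> 'y) \<Rightarrow> (nat \<Rightarrow> 'x feat) \<Rightarrow> nat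
   \<Rightarrow> ('x,'y) rule list \<Rightarrow> nat \<Rightarrow> ('x,'y) rule list \<Rightarrow> bool" where
  "sr_step m xs ys phis t L e L' \<longleftrightarrow>
     (\<exists>C l. e \<noteq> 0 \<and> map_of L e = Some (C, l) \<and> sat (xs t) C \<and>
        (if l = ys t then L' = L
         else (let C' = C @ [(t, \<lambda>z. \<not> phis t z)] in
               if card (set (map snd C')) \<ge> m
               then L' = filter (\<lambda>q. fst q \<noteq> e) L
               else L' = map (\<lambda>q. if fst q = e then (e, (C', l)) else q) L)))
   \<or> (e = 0 \<and> (\<forall>r\<in>set L. \<not> sat (xs t) (fst (snd r))) \<and>
        (if ys 0 = ys t then L' = L else L' = L @ [(t, ([], ys t))]))"

(* A run of SR-DFF: L t is the rule list before processing x_t (t \<ge> 1),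
   ex t the time index of the explanation at time t. *)
definition sr_run ::
  "nat \<Rightarrow> (nat \<Rightarrow> 'x) \<Rightarrow> (nat \<Rightarrow> 'y) \<Rightarrow> (nat \<Rightarrow> 'x feat)
   \<Rightarrow> (nat \<Rightarrow> ('x,'y) rule list) \<Rightarrow> (nat \<Rightarrow> nat) \<Rightarrow> bool" where
  "sr_run m xs ys phis L ex \<longleftrightarrow>
     L 1 = [] \<and> (\<forall>t\<ge>1. ex t < t \<and> sr_step m xs ys phis t (L t) (ex t) (L (Suc t)))"

(* Example x_t is an exception: the feedback is inconsistent with the
   representation (c*(x) = ell (gi x)). *)
definition exception ::
  "(nat \<Rightarrow> 'y) \<Rightarrow> ('x \<Rightarrow> nat) \<Rightarrow> (nat \<Rightarrow> nat \<Rightarrow> 'x feat)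
   \<Rightarrow> (nat \<Rightarrow> 'x) \<Rightarrow> (nat \<Rightarrow> 'y) \<Rightarrow> (nat \<Rightarrow> 'x feat)
   \<Rightarrow> (nat \<Rightarrow> ('x,'y) rule list) \<Rightarrow> (nat \<Rightarrow> nat) \<Rightarrow> nat \<Rightarrow> bool" where
  "exception ell gi sep xs ys phis L ex t \<longleftrightarrow>
     (if t = 0 then ys 0 \<noteq> ell (gi (xs 0))
      else ys t \<noteq> ell (gi (xs t)) \<or>
           (pred (ys 0) (L t) (ex t) \<noteq> ys t \<and>
            \<not> (ell (gi (xs t)) \<noteq> ell (gi (xs (ex t))) \<and>
               phis t = sep (gi (xs t)) (gi (xs (ex t))))))"

end

theory Submission
  imports Defs
begin

text \<open>
  If the rules of x_s and x_s' with s < s' coexist, then x_s' satisfied no rule when it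
  arrived, in particular not the (then shorter) conjunction of x_s. So some feature of that
  conjunction fails on x_s'. That feature is the negation of the teacher's feedback on a
  mistake on some x_u explained by x_s; if x_u is not an exception, the feedback separates
  G(x_u) from G(x_s), so the feature holds on all of G(x_s) and hence x_s' is not in G(x_s).
\<close>

lemma sr_step_rule_cases:
  assumes "sr_step m xs ys phis t L e L'" and "(s, C', l) \<in> set L'"
  obtains (kept) "(s, C', l) \<in> set L"
  | (refined) C where "s = e" "e \<noteq> 0" "map_of L e = Some (C, l)" "l \<noteq> ys t"
      "C' = C @ [(t, \<lambda>z. \<not> phis t z)]"
  | (created) "s = t" "C' = []" "e = 0" "\<forall>r\<in>set L. \<not> sat (xs t) (fst (snd r))"
  using assms unfolding sr_step_def Let_def by (auto split: if_splits)

lemma sr_run_step: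
  assumes "sr_run m xs ys phis L ex" and "t \<ge> 1"
  shows "sr_step m xs ys phis t (L t) (ex t) (L (Suc t))" and "ex t < t"
  using assms unfolding sr_run_def by auto

lemma sr_run_rule_index:
  assumes run: "sr_run m xs ys phis L ex" and "t \<ge> 1" and "(s, C, l) \<in> set (L t)"
  shows "1 \<le> s \<and> s < t"
  using assms(2,3)
proof (induction t arbitrary: s C l rule: dec_induct)
  case base
  then show ?case using run by (simp add: sr_run_def)
next
  case (step n)
  have "ex n < n" using sr_run_step(2)[OF run step.hyps(1)] .
  from sr_run_step(1)[OF run step.hyps(1)] step.prems show ?case
    by (cases rule: sr_step_rule_cases) (use step.IH step.hyps(1) \<open>ex n < n\<close> in fastforce)+
qed

lemma sr_run_conjunct_origin:
  assumes run: "sr_run m xs ys phis L ex" and "t \<ge> 1"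
    and "(s, C, l) \<in> set (L t)" and "(u, f) \<in> set C"
  shows "1 \<le> u \<and> ex u = s \<and> pred (ys 0) (L u) s \<noteq> ys u \<and> f = (\<lambda>z. \<not> phis u z)"
  using assms(2-4)
proof (induction t arbitrary: s C l rule: dec_induct)
  case base
  then show ?case using run by (simp add: sr_run_def)
next
  case (step n)
  from sr_run_step(1)[OF run step.hyps(1)] step.prems(1) show ?case
  proof (cases rule: sr_step_rule_cases)
    case kept
    then show ?thesis using step by blast
  next
    case (refined C0)
    have old: "(s, C0, l) \<in> set (L n)" using refined by (simp add: map_of_SomeD)
    from step.prems(2) consider "(u, f) \<in> set C0" | "u = n" "f = (\<lambda>z. \<not> phis n z)"
      using refined(5) by auto
    then show ?thesis
    proof cases
      case 1
      then show ?thesis using step.IH[OF old] by blast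
    next
      case 2
      then show ?thesis using refined step.hyps(1) by (simp add: pred_def)
    qed
  next
    case created
    then show ?thesis using step.prems(2) by simp
  qed
qed

lemma sr_run_rule_persists:
  assumes run: "sr_run m xs ys phis L ex" and "t \<ge> 1" and "s < t" and "t \<le> t'"
    and "(s, C', l') \<in> set (L t')"
  shows "\<exists>C l. (s, C, l) \<in> set (L t) \<and> set C \<subseteq> set C'"
  using assms(4,5)
proof (induction t' arbitrary: C' l' rule: dec_induct)
  case base
  then show ?case by blast
next
  case (step n)
  have "n \<ge> 1" using \<open>t \<ge> 1\<close> step.hyps(1) by simp
  from sr_run_step(1)[OF run this] step.prems show ?case
  proof (cases rule: sr_step_rule_cases)
    case kept
    then show ?thesis using step.IH by blast
  next
    case (refined C0)
    then have "(s, C0, l') \<in> set (L n)" by (simp add: map_of_SomeD)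
    then show ?thesis using step.IH refined(5) by fastforce
  next
    case created
    then show ?thesis using \<open>s < t\<close> step.hyps(1) by simp
  qed
qed

lemma sr_run_rule_created_unsatisfied:
  assumes run: "sr_run m xs ys phis L ex" and "t \<ge> 1" and "(s, C, l) \<in> set (L t)"
  shows "\<forall>r\<in>set (L s). \<not> sat (xs s) (fst (snd r))"
proof -
  have s: "1 \<le> s" "s < t" using sr_run_rule_index[OF assms] by auto
  obtain C0 l0 where "(s, C0, l0) \<in> set (L (Suc s))"
    using sr_run_rule_persists[OF run _ lessI _ assms(3)] s by auto
  from sr_run_step(1)[OF run s(1)] this show ?thesis
  proof (cases rule: sr_step_rule_cases)
    case kept
    then show ?thesis using sr_run_rule_index[OF run s(1)] by auto
  next
    case refined
    then show ?thesis using sr_run_step(2)[OF run s(1)] by simp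
  qed
qed

lemma representation_sep_false_on_target:
  assumes "representation Phi m G ell gi sep" and "ell (gi x) \<noteq> ell (gi y)"
    and "z \<in> G (gi y)"
  shows "\<not> sep (gi x) (gi y) z"
  using assms unfolding representation_def by blast

lemma sr_run_valid_conjunct_holds_on_component:
  assumes rep: "representation Phi m G ell gi sep" and run: "sr_run m xs ys phis L ex"
    and "t \<ge> 1" and "(s, C, l) \<in> set (L t)" and "(u, f) \<in> set C"
    and "\<not> exception ell gi sep xs ys phis L ex u" and "z \<in> G (gi (xs s))"
  shows "f z"
proof -
  have u: "1 \<le> u" "ex u = s" "pred (ys 0) (L u) s \<noteq> ys u" "f = (\<lambda>z. \<not> phis u z)"
    using sr_run_conjunct_origin[OF run assms(3-5)] by auto
  then have "ell (gi (xs u)) \<noteq> ell (gi (xs s))" "phis u = sep (gi (xs u)) (gi (xs s))"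
    using assms(6) unfolding exception_def by auto
  then show ?thesis
    using representation_sep_false_on_target[OF rep _ assms(7)] u(4) by simp
qed

lemma sr_run_uncorrupted_rule_separates:
  assumes rep: "representation Phi m G ell gi sep" and run: "sr_run m xs ys phis L ex"
    and "t \<ge> 1" and "(s, C, l) \<in> set (L t)" and "(s', C', l') \<in> set (L t)" and "s < s'"
    and "\<forall>(u, f)\<in>set C. \<not> exception ell gi sep xs ys phis L ex u"
  shows "G (gi (xs s)) \<noteq> G (gi (xs s'))"
proof
  assume same: "G (gi (xs s)) = G (gi (xs s'))"
  have "1 \<le> s'" "s' < t" using sr_run_rule_index[OF run assms(3,5)] by auto
  then obtain C0 l0 where C0: "(s, C0, l0) \<in> set (L s')" "set C0 \<subseteq> set C"
    using sr_run_rule_persists[OF run _ \<open>s < s'\<close> _ assms(4)] by auto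
  have "\<not> sat (xs s') C0"
    using sr_run_rule_created_unsatisfied[OF run assms(3,5)] C0(1) by fastforce
  then obtain u f where uf: "(u, f) \<in> set C" "\<not> f (xs s')"
    using C0(2) unfolding sat_def by auto
  have "xs s' \<in> G (gi (xs s))"
    using rep same unfolding representation_def by auto
  then have "f (xs s')"
    using sr_run_valid_conjunct_holds_on_component[OF rep run assms(3,4) uf(1)] assms(7) uf(1)
    by blast
  with uf(2) show False ..
qed

theorem lemma2:
  fixes Phi :: "'x feat set" and m k :: nat and G :: "nat \<Rightarrow> 'x set"
    and ell :: "nat \<Rightarrow> 'y::finite" and gi :: "'x \<Rightarrow> nat"
    and sep :: "nat \<Rightarrow> nat \<Rightarrow> 'x feat"
    and xs :: "nat \<Rightarrow> 'x" and ys :: "nat \<Rightarrow> 'y" and phis :: "nat \<Rightarrow> 'x feat"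
    and L :: "nat \<Rightarrow> ('x,'y) rule list" and ex :: "nat \<Rightarrow> nat"
  assumes "representation Phi m G ell gi sep"
    and "sr_run m xs ys phis L ex"
    and "finite {t. exception ell gi sep xs ys phis L ex t}"
    and "card {t. exception ell gi sep xs ys phis L ex t} \<le> k"
    and "t \<ge> 1"
    and "(s, (C, l)) \<in> set (L t)" and "(s', (C', l')) \<in> set (L t)" and "s \<noteq> s'"
    and "\<not> exception ell gi sep xs ys phis L ex s"
    and "\<not> exception ell gi sep xs ys phis L ex s'"
    and "\<forall>(u,f)\<in>set C. \<not> exception ell gi sep xs ys phis L ex u"
    and "\<forall>(u,f)\<in>set C'. \<not> exception ell gi sep xs ys phis L ex u"
  shows "G (gi (xs s)) \<noteq> G (gi (xs s'))"
proof (cases "s < s'")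
  case True
  show ?thesis using sr_run_uncorrupted_rule_separates[OF assms(1,2,5-7) True assms(11)] .
next
  case False
  then have "s' < s" using \<open>s \<noteq> s'\<close> by simp
  then show ?thesis using sr_run_uncorrupted_rule_separates[OF assms(1,2,5,7,6) _ assms(12)]
    by metis
qed

end
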